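(* For every $n$ there exist two sets $A$ and $B$, each consisting of $n$ pairwise disjoint axis-aligned rectangles in the plane, such that every sequence of sets $A=X_0,X_1,\dots,X_m=B$ in which each $X_j$ is an independent set of $A\cup B$ and consecutive sets differ by exactly one rectangle contains an empty set $X_j=\emptyset$; in particular no MIX function for rectangles has $\Gamma(n)<n$. Consequently, for any $\beta>0$, there is no fully dynamic data structure maintaining a $\beta$-approximate maximum independent set of axis-aligned rectangles that reports at most $o(n)$ changes in the independent set per update.
   Context: An independent set of a set of rectangles is a subset of pairwise disjoint rectangles; $\mathrm{OPT}(S)$ is the maximum size of an independent set of $S$. A MIX function assigns to independent sets $A,B$ a sequence $\mathrm{MIX}(A,B,i)$, $i\in[0,|A|+|B|]$, of independent sets with $\mathrm{MIX}(A,B,0)=A$, $\mathrm{MIX}(A,B,|A|+|B|)=B$, consecutive sets differing by one item, and $|\mathrm{MIX}(A,B,i)|\ge\min(|A|,|B|)-\Gamma(|A|+|B|)$. A fully dynamic data structure maintains a set $S$ of rectangles, initially empty, under updates $u$ replacing $S$ by $S\oplus\{u\}$ (insert if absent, delete if present), and after each update reports the symmetric difference between the previous and new maintained set $I\subseteq S$; it is $\beta$-approximate if $I$ is always an independent set with $|I|\ge\beta\,\mathrm{OPT}(S)$. Here $n$ is the number of stored rectangles. *)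

theory Defs
  imports Complex_Main "HOL-Library.Landau_Symbols"
begin

type_synonym rect = "(real \<times> real) set"

definition is_rect :: "rect \<Rightarrow> bool" where
  "is_rect R \<longleftrightarrow> (\<exists>a b c d. a < b \<and> c < d \<and> R = {a..b} \<times> {c..d})"

definition pairwise_disj :: "rect set \<Rightarrow> bool" where
  "pairwise_disj X \<longleftrightarrow> (\<forall>R\<in>X. \<forall>R'\<in>X. R \<noteq> R' \<longrightarrow> R \<inter> R' = {})"

definition independent :: "rect set \<Rightarrow> rect set \<Rightarrow> bool" where
  "independent S I \<longleftrightarrow> I \<subseteq> S \<and> pairwise_disj I"

definition OPT :: "rect set \<Rightarrow> nat" where
  "OPT S = Max {card I | I. independent S I}"

definition symdiff :: "'a set \<Rightarrow> 'a set \<Rightarrow> 'a set" where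
  "symdiff X Y = (X - Y) \<union> (Y - X)"

definition stored :: "rect list \<Rightarrow> rect set" where
  "stored us = fold (\<lambda>u S. symdiff S {u}) us {}"

text \<open>A (deterministic) fully dynamic data structure is modelled by the map D sending an
  update history to the maintained set I.\<close>
definition beta_approx_ds :: "real \<Rightarrow> (rect list \<Rightarrow> rect set) \<Rightarrow> bool" where
  "beta_approx_ds \<beta> D \<longleftrightarrow>
     (\<forall>us. (\<forall>u\<in>set us. is_rect u) \<longrightarrow>
        independent (stored us) (D us) \<and> real (card (D us)) \<ge> \<beta> * real (OPT (stored us)))"

definition changes_bounded :: "(nat \<Rightarrow> real) \<Rightarrow> (rect list \<Rightarrow> rect set) \<Rightarrow> bool" where
  "changes_bounded f D \<longleftrightarrow>
     (\<forall>us u. (\<forall>v\<in>set (us @ [u]). is_rect v) \<longrightarrow>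
        real (card (symdiff (D us) (D (us @ [u])))) \<le> f (card (stored (us @ [u]))))"

end

theory Submission
  imports Defs
begin

text \<open>Take the n rows and the n columns of a grid of strips, so that every row crosses
  every column. An independent subset of rows and columns then consists of rows only or of
  columns only, so a walk from the rows to the columns that changes one rectangle at a time
  must at some step pass from a set of rows to a set of columns; these are disjoint and
  differ by a single rectangle, so one of them is empty.

  Against a dynamic structure, insert n rows and then m > n / \<beta> columns. As soon as all
  rows are present the maintained set has at least \<beta> n elements; it starts among the rows
  and ends among the columns, so the update at which it switches side replaces at least
  2 \<beta> n rectangles while at most n + m = O(n) rectangles are stored.\<close>

lemma pairwise_disj_image:
  "(\<And>i j. i \<noteq> j \<Longrightarrow> F i \<inter> F j = {}) \<Longrightarrow> pairwise_disj (F ` I)"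
  unfolding pairwise_disj_def by (metis imageE)

definition crossing :: "rect set \<Rightarrow> rect set \<Rightarrow> bool" where
  "crossing A B \<longleftrightarrow> (\<forall>a\<in>A. \<forall>b\<in>B. a \<inter> b \<noteq> {})"

lemma independent_crossing_side:
  assumes "crossing A B" and "independent (A \<union> B) I"
  shows "I \<subseteq> A \<or> I \<subseteq> B"
proof (rule ccontr)
  assume "\<not> (I \<subseteq> A \<or> I \<subseteq> B)"
  then obtain a b where ab: "a \<in> I" "a \<notin> B" "b \<in> I" "b \<notin> A" by blast
  with assms(2) have "a \<in> A" "b \<in> B" by (auto simp: independent_def)
  with ab assms(1) have "a \<noteq> b" "a \<inter> b \<noteq> {}" by (auto simp: crossing_def)
  with ab assms(2) show False by (auto simp: independent_def pairwise_disj_def)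
qed

lemma crossing_switch:
  assumes "crossing A B"
    and "\<And>j. a \<le> j \<Longrightarrow> j \<le> b \<Longrightarrow> independent (A \<union> B) (X j)"
    and "X a \<subseteq> A" "\<not> X b \<subseteq> A" "a \<le> b"
  shows "\<exists>t. a \<le> t \<and> t < b \<and> X t \<subseteq> A \<and> X (Suc t) \<subseteq> B"
proof -
  have "\<exists>k<b - a. (\<forall>i\<le>k. X (a + i) \<subseteq> A) \<and> \<not> X (a + Suc k) \<subseteq> A"
    using ex_least_nat_less[of "\<lambda>i. \<not> X (a + i) \<subseteq> A" "b - a"] assms(3-5) by simp
  then obtain k where k: "k < b - a" "X (a + k) \<subseteq> A" "\<not> X (a + Suc k) \<subseteq> A"
    by blast
  have "independent (A \<union> B) (X (Suc (a + k)))"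
    using assms(2) k(1) by simp
  then have "X (Suc (a + k)) \<subseteq> A \<or> X (Suc (a + k)) \<subseteq> B"
    by (rule independent_crossing_side[OF assms(1)])
  with k have "X (Suc (a + k)) \<subseteq> B" by simp
  with k show ?thesis by (intro exI[of _ "a + k"]) simp
qed

lemma symdiff_disjoint: "X \<inter> Y = {} \<Longrightarrow> symdiff X Y = X \<union> Y"
  by (auto simp: symdiff_def)

lemma crossing_switch_large_symdiff:
  assumes "crossing A B" "A \<inter> B = {}" "finite A" "finite B"
    and "\<And>j. a \<le> j \<Longrightarrow> j \<le> b \<Longrightarrow> independent (A \<union> B) (X j)"
    and "\<And>j. a \<le> j \<Longrightarrow> j \<le> b \<Longrightarrow> c \<le> real (card (X j))"
    and "X a \<subseteq> A" "\<not> X b \<subseteq> A" "a \<le> b"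
  shows "\<exists>t. a \<le> t \<and> t < b \<and> 2 * c \<le> real (card (symdiff (X t) (X (Suc t))))"
proof -
  have "\<exists>t. a \<le> t \<and> t < b \<and> X t \<subseteq> A \<and> X (Suc t) \<subseteq> B"
    by (rule crossing_switch[OF assms(1,5,7-9)])
  then obtain t where t: "a \<le> t" "t < b" "X t \<subseteq> A" "X (Suc t) \<subseteq> B" by blast
  then have "X t \<inter> X (Suc t) = {}" using assms(2) by blast
  moreover have "finite (X t)" "finite (X (Suc t))"
    using finite_subset[OF t(3) assms(3)] finite_subset[OF t(4) assms(4)] .
  ultimately have "card (symdiff (X t) (X (Suc t))) = card (X t) + card (X (Suc t))"
    by (simp add: symdiff_disjoint card_Un_disjoint)
  moreover have "c \<le> real (card (X t))" "c \<le> real (card (X (Suc t)))"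
    using assms(6) t(1,2) by simp_all
  ultimately have "2 * c \<le> real (card (symdiff (X t) (X (Suc t))))" by simp
  with t(1,2) show ?thesis by blast
qed

lemma reconfiguration_passes_through_empty:
  assumes "crossing A B" "A \<inter> B = {}" "finite A" "finite B"
    and "X 0 = A" "X m = B" "\<forall>j\<le>m. independent (A \<union> B) (X j)"
    and "\<forall>j<m. card (symdiff (X j) (X (Suc j))) = 1"
  shows "\<exists>j\<le>m. X j = {}"
proof (rule ccontr)
  assume "\<not> ?thesis"
  then have nonempty: "X j \<noteq> {}" if "j \<le> m" for j using that by blast
  have "1 \<le> real (card (X j))" if "j \<le> m" for j
  proof -
    have "finite (X j)"
      using assms(3,4,7) that by (meson finite_UnI finite_subset independent_def)
    with nonempty[OF that] show ?thesis by (simp add: Suc_le_eq card_gt_0_iff)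
  qed
  moreover have "\<not> X m \<subseteq> A" using nonempty[of m] assms(2,6) by auto
  ultimately have "\<exists>t. t < m \<and> 2 * 1 \<le> real (card (symdiff (X t) (X (Suc t))))"
    using crossing_switch_large_symdiff[OF assms(1-4), of 0 m X 1] assms(5,7) by simp
  with assms(8) show False by fastforce
qed

lemma fold_toggle_fresh:
  "distinct xs \<Longrightarrow> set xs \<inter> S = {} \<Longrightarrow> fold (\<lambda>u S. symdiff S {u}) xs S = S \<union> set xs"
proof (induction xs arbitrary: S)
  case (Cons x xs)
  then have "symdiff S {x} = insert x S" by (auto simp: symdiff_def)
  with Cons show ?case by auto
qed simp

lemma stored_distinct: "distinct us \<Longrightarrow> stored us = set us"
  unfolding stored_def by (simp add: fold_toggle_fresh)

lemma card_le_OPT: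
  assumes "finite S" "independent S I"
  shows "card I \<le> OPT S"
proof -
  have "{card I | I. independent S I} \<subseteq> card ` Pow S"
    by (auto simp: independent_def)
  then have "finite {card I | I. independent S I}"
    using assms(1) by (meson finite_Pow_iff finite_imageI finite_subset)
  with assms(2) show ?thesis unfolding OPT_def by (intro Max_ge) auto
qed

lemma beta_approx_ds_history:
  assumes "beta_approx_ds \<beta> D" "distinct us" "\<forall>u\<in>set us. is_rect u"
  shows "independent (set us) (D us)"
    and "\<beta> * real (OPT (set us)) \<le> real (card (D us))"
  using assms stored_distinct[OF assms(2)] unfolding beta_approx_ds_def by metis+

lemma beta_approx_ds_card_ge:
  assumes "beta_approx_ds \<beta> D" "\<beta> \<ge> 0" "distinct us" "\<forall>u\<in>set us. is_rect u"
    and "J \<subseteq> set us" "pairwise_disj J"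
  shows "\<beta> * real (card J) \<le> real (card (D us))"
proof -
  have "card J \<le> OPT (set us)"
    using assms(5,6) by (intro card_le_OPT) (auto simp: independent_def)
  then have "\<beta> * real (card J) \<le> \<beta> * real (OPT (set us))"
    using assms(2) by (simp add: mult_left_mono)
  also have "\<dots> \<le> real (card (D us))"
    by (rule beta_approx_ds_history(2)[OF assms(1,3,4)])
  finally show ?thesis .
qed

lemma beta_approx_ds_large_change:
  assumes "\<beta> > 0" "beta_approx_ds \<beta> D"
    and "distinct (as @ bs)" "\<forall>R\<in>set (as @ bs). is_rect R"
    and "crossing (set as) (set bs)" "pairwise_disj (set as)" "pairwise_disj (set bs)"
    and "real (length as) < \<beta> * real (length bs)"
  shows "\<exists>t. length as \<le> t \<and> t < length (as @ bs) \<and>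
           2 * \<beta> * real (length as) \<le>
             real (card (symdiff (D (take t (as @ bs))) (D (take (Suc t) (as @ bs)))))"
proof -
  define ws where "ws = as @ bs"
  define n where "n = length as"
  define I where "I t = D (take t ws)" for t
  have "distinct ws" "\<forall>R\<in>set ws. is_rect R" using assms(3,4) by (simp_all add: ws_def)
  then have prefix: "distinct (take t ws)" "\<forall>R\<in>set (take t ws). is_rect R" for t
    using set_take_subset[of t ws] by auto
  have indep: "independent (set as \<union> set bs) (I t)" for t
    using beta_approx_ds_history(1)[OF assms(2) prefix] set_take_subset[of t ws]
    unfolding I_def independent_def ws_def by auto
  have card_as: "card (set as) = n" and card_bs: "card (set bs) = length bs"
    using assms(3) by (simp_all add: n_def distinct_card)
  have large: "\<beta> * real n \<le> real (card (I t))" if "n \<le> t" for t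
  proof -
    have "set as \<subseteq> set (take t ws)"
      using set_take_subset_set_take[OF that, of ws] by (simp add: ws_def n_def)
    from beta_approx_ds_card_ge[OF assms(2) _ prefix this assms(6)] assms(1) card_as
    show ?thesis by (simp add: I_def)
  qed
  have start: "I n \<subseteq> set as"
    using beta_approx_ds_history(1)[OF assms(2) prefix, of n]
    by (simp add: I_def ws_def n_def independent_def)
  have finish: "\<not> I (length ws) \<subseteq> set as"
  proof
    assume "I (length ws) \<subseteq> set as"
    then have "card (I (length ws)) \<le> n"
      using card_as by (metis List.finite_set card_mono)
    moreover have "\<beta> * real (length bs) \<le> real (card (I (length ws)))"
      using beta_approx_ds_card_ge[OF assms(2) _ prefix _ assms(7), of "length ws"] assms(1) card_bs
      by (simp add: I_def ws_def)
    ultimately show False using assms(8) unfolding n_def by linarith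
  qed
  have "set as \<inter> set bs = {}" using assms(3) by simp
  from crossing_switch_large_symdiff[OF assms(5) this _ _ indep large start finish]
  show ?thesis by (simp add: I_def ws_def n_def mult.assoc)
qed

lemma changes_bounded_prefix:
  assumes "changes_bounded f D" "distinct ws" "\<forall>R\<in>set ws. is_rect R" "t < length ws"
  shows "real (card (symdiff (D (take t ws)) (D (take (Suc t) ws)))) \<le> f (Suc t)"
proof -
  have take_Suc: "take (Suc t) ws = take t ws @ [ws ! t]"
    using assms(4) by (simp add: take_Suc_conv_app_nth)
  have "card (stored (take (Suc t) ws)) = Suc t"
    using assms(2,4) by (simp add: stored_distinct distinct_card)
  moreover have "\<forall>R\<in>set (take t ws @ [ws ! t]). is_rect R"
    using assms(3) set_take_subset[of "Suc t" ws] unfolding take_Suc by blast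
  ultimately show ?thesis
    using assms(1) unfolding changes_bounded_def take_Suc by metis
qed

definition slab :: "nat \<Rightarrow> real set" where
  "slab i = {2 * real i .. 2 * real i + 1}"

(* Rows are 2m + 2 long, slightly longer than needed to cross the m columns, so that no row
   coincides with a column, even for m = 0. *)
definition row :: "nat \<Rightarrow> nat \<Rightarrow> rect" where
  "row m i = {0 .. 2 * real m + 2} \<times> slab i"

definition col :: "nat \<Rightarrow> nat \<Rightarrow> rect" where
  "col n k = slab k \<times> {0 .. 2 * real n + 2}"

lemma slab_disjoint: "i \<noteq> j \<Longrightarrow> slab i \<inter> slab j = {}"
proof -
  assume "i \<noteq> j"
  then have "real i + 1 \<le> real j \<or> real j + 1 \<le> real i" by linarith
  then show ?thesis by (auto simp: slab_def)
qed

lemma is_rect_Icc: "a < b \<Longrightarrow> c < d \<Longrightarrow> is_rect ({a..b} \<times> {c..d})"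
  by (auto simp: is_rect_def)

lemma is_rect_row: "is_rect (row m i)"
  by (simp add: row_def slab_def is_rect_Icc)

lemma is_rect_col: "is_rect (col n k)"
  by (simp add: col_def slab_def is_rect_Icc)

lemma inj_row: "inj (row m)"
  by (rule injI) (auto simp: row_def slab_def times_eq_iff)

lemma inj_col: "inj (col n)"
  by (rule injI) (auto simp: col_def slab_def times_eq_iff)

lemma card_rows: "card (row m ` {..<n}) = n"
  by (simp add: card_image inj_on_subset[OF inj_row])

lemma card_cols: "card (col n ` {..<m}) = m"
  by (simp add: card_image inj_on_subset[OF inj_col])

lemma row_neq_col: "row m i \<noteq> col n k"
  by (auto simp: row_def col_def slab_def times_eq_iff)

lemma pairwise_disj_rows: "pairwise_disj (row m ` I)"
  by (rule pairwise_disj_image) (simp add: row_def slab_disjoint Times_Int_Times)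

lemma pairwise_disj_cols: "pairwise_disj (col n ` K)"
  by (rule pairwise_disj_image) (simp add: col_def slab_disjoint Times_Int_Times)

lemma crossing_rows_cols: "crossing (row m ` {..<n}) (col n ` {..<m})"
proof -
  have "(2 * real k, 2 * real i) \<in> row m i \<inter> col n k" if "i < n" "k < m" for i k
    using that by (auto simp: row_def col_def slab_def)
  then show ?thesis unfolding crossing_def by blast
qed

lemma rows_cols_disjoint: "row m ` I \<inter> col n ` K = {}"
  using row_neq_col by auto

definition grid_history :: "nat \<Rightarrow> nat \<Rightarrow> rect list" where
  "grid_history n m = map (row m) [0..<n] @ map (col n) [0..<m]"

lemma distinct_grid_history: "distinct (grid_history n m)"
  using rows_cols_disjoint
  by (auto simp: grid_history_def distinct_map inj_on_subset[OF inj_row] inj_on_subset[OF inj_col])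

lemma is_rect_grid_history: "\<forall>R\<in>set (grid_history n m). is_rect R"
  by (auto simp: grid_history_def is_rect_row is_rect_col)

lemma beta_approx_ds_grid_change:
  assumes "\<beta> > 0" "beta_approx_ds \<beta> D" "real n < \<beta> * real m"
  shows "\<exists>t. n \<le> t \<and> t < n + m \<and>
           2 * \<beta> * real n \<le>
             real (card (symdiff (D (take t (grid_history n m))) (D (take (Suc t) (grid_history n m)))))"
proof -
  have "crossing (set (map (row m) [0..<n])) (set (map (col n) [0..<m]))"
    "pairwise_disj (set (map (row m) [0..<n]))" "pairwise_disj (set (map (col n) [0..<m]))"
    using crossing_rows_cols pairwise_disj_rows pairwise_disj_cols
    by (simp_all add: atLeast0LessThan)
  from beta_approx_ds_large_change[OF assms(1,2) _ _ this]
  show ?thesis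
    using assms(3) distinct_grid_history is_rect_grid_history by (simp add: grid_history_def)
qed

lemma no_sublinear_changes:
  assumes "\<beta> > 0" "f \<in> o(\<lambda>n. real n)" "beta_approx_ds \<beta> D"
  shows "\<not> changes_bounded f D"
proof
  assume bounded: "changes_bounded f D"
  obtain K :: nat where K: "1 < real K * \<beta>"
    using ex_less_of_nat_mult[OF assms(1)] by blast
  define \<epsilon> where "\<epsilon> = \<beta> / (real K + 1)"
  have "\<epsilon> > 0" using assms(1) by (simp add: \<epsilon>_def)
  from landau_o.smallD[OF assms(2) this] obtain N where N: "\<And>c. N \<le> c \<Longrightarrow> f c \<le> \<epsilon> * real c"
    unfolding eventually_at_top_linorder by force
  define n where "n = Suc N"
  define m where "m = K * n"
  have "real n * 1 < real n * (real K * \<beta>)"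
    using K by (intro mult_strict_left_mono) (simp_all add: n_def)
  then have "real n < \<beta> * real m"
    by (simp add: m_def algebra_simps)
  with beta_approx_ds_grid_change[OF assms(1,3)] obtain t where t: "n \<le> t" "t < n + m"
    and change: "2 * \<beta> * real n \<le>
      real (card (symdiff (D (take t (grid_history n m))) (D (take (Suc t) (grid_history n m)))))"
    by blast
  note change
  also have "\<dots> \<le> f (Suc t)"
    using changes_bounded_prefix[OF bounded distinct_grid_history is_rect_grid_history] t(2)
    by (simp add: grid_history_def)
  also have "\<dots> \<le> \<epsilon> * real (Suc t)"
    using N[of "Suc t"] t(1) by (simp add: n_def)
  also have "\<dots> \<le> \<epsilon> * real (n + m)"
    using t(2) \<open>\<epsilon> > 0\<close> by simp
  also have "\<dots> = \<beta> * real n"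
    by (simp add: \<epsilon>_def m_def field_simps)
  finally show False
    using assms(1) by (simp add: n_def)
qed

theorem lemma1:
  shows "(\<forall>n::nat. \<exists>A B :: rect set.
            finite A \<and> finite B \<and> card A = n \<and> card B = n \<and>
            (\<forall>R\<in>A \<union> B. is_rect R) \<and> pairwise_disj A \<and> pairwise_disj B \<and>
            (\<forall>(X :: nat \<Rightarrow> rect set) m.
               X 0 = A \<and> X m = B \<and> (\<forall>j\<le>m. independent (A \<union> B) (X j)) \<and>
               (\<forall>j<m. card (symdiff (X j) (X (Suc j))) = 1)
               \<longrightarrow> (\<exists>j\<le>m. X j = {})))
       \<and> (\<forall>\<beta>::real. \<beta> > 0 \<longrightarrow>
            \<not> (\<exists>(D :: rect list \<Rightarrow> rect set) (f :: nat \<Rightarrow> real).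
                 f \<in> o(\<lambda>n. real n) \<and> beta_approx_ds \<beta> D \<and> changes_bounded f D))"
  apply (intro conjI allI impI)
  subgoal for n
    using reconfiguration_passes_through_empty[OF crossing_rows_cols[of n n] rows_cols_disjoint
        finite_imageI[OF finite_lessThan] finite_imageI[OF finite_lessThan]]
    by (intro exI[of _ "row n ` {..<n}"] exI[of _ "col n ` {..<n}"])
      (auto simp: card_rows card_cols is_rect_row is_rect_col pairwise_disj_rows pairwise_disj_cols)
  subgoal for \<beta>
    using no_sublinear_changes by blast
  done

end
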